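(* In the Mahi-Mahi protocol, if a leader slot $s$ is decided (i.e., classified as commit or skip) at two honest validators $v$ and $v'$, then either both validators commit $s$, or both validators skip $s$.
   Context: Setting: $n=3f+1$ validators, at most $f$ Byzantine; honest validators create exactly one block per round, Byzantine ones may equivocate. Each valid block of round $r$ references (parents) at least $2f+1$ blocks of round $r-1$; each validator has a local DAG of valid blocks containing a block only with all its causal history. There is a path from $b$ to $b'$ if $b'$ is reached from $b$ along parent references. A block $b$ of round $r'$ is a vote for a block $L$ of round $r<r'$ with author $a$ if the first block with author $a$ and round $r$ met in the deterministic depth-first search from $b$ is $L$. With wave length $w\in\{4,5\}$, a block of round $r+w-1$ is a certificate for a block $L$ of round $r$ if at least $2f+1$ of its parents are votes for $L$. Leader slots are pairs (validator, round) chosen by a global perfect common coin, identical for all validators and totally ordered by round then coin order. A validator classifies slots as commit (of a block), skip or undecided: direct skip if its local DAG has $2f+1$ round-$(r+w-2)$ blocks that are not votes for the block $L$ of the slot; direct commit of $L$ if it has $2f+1$ round-$(r+w-1)$ certificates for $L$; otherwise the indirect rule: the anchor is the first slot (in slot order) of round $>r+w-1$ not classified as skip; if the anchor is committed with block $A$, commit $L$ if some certificate $c$ for $L$ has a path from $A$ to $c$, else skip; if the anchor is undecided, the slot is undecided. *)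

theory Defs
  imports Main
begin

text \<open>A block records its author, its round, the ordered list of its parent
  blocks (the references; their order is the order used by the deterministic
  depth-first search) and an arbitrary payload (so that a Byzantine author may
  create several different blocks for the same round, i.e. equivocate).\<close>

datatype block = Block (author: nat) (rnd: nat) (parents: "block list") (payload: nat)

fun valid :: "nat \<Rightarrow> nat \<Rightarrow> block \<Rightarrow> bool" where
  "valid n f (Block a r ps p) =
     (a < n \<and>
      (r = 0 \<longrightarrow> ps = []) \<and>
      (0 < r \<longrightarrow> list_all (\<lambda>q. rnd q = r - 1) ps \<and> list_all (valid n f) ps
                 \<and> 2 * f + 1 \<le> card (author ` set ps)))"

inductive path :: "block \<Rightarrow> block \<Rightarrow> bool" where
  path_refl: "path b b"
| path_step: "c \<in> set (parents b) \<Longrightarrow> path c b' \<Longrightarrow> path b b'"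

fun fsome :: "'a option list \<Rightarrow> 'a option" where
  "fsome [] = None"
| "fsome (Some x # _) = Some x"
| "fsome (None # xs) = fsome xs"

fun dfs_find :: "nat \<Rightarrow> nat \<Rightarrow> block \<Rightarrow> block option" where
  "dfs_find a r (Block au rd ps p) =
     (if au = a \<and> rd = r then Some (Block au rd ps p)
      else fsome (map (dfs_find a r) ps))"

definition is_vote :: "block \<Rightarrow> block \<Rightarrow> bool" where
  "is_vote b L \<longleftrightarrow> rnd L < rnd b \<and> dfs_find (author L) (rnd L) b = Some L"

definition is_cert :: "nat \<Rightarrow> nat \<Rightarrow> block \<Rightarrow> block \<Rightarrow> bool" where
  "is_cert f w c L \<longleftrightarrow> rnd c = rnd L + w - 1 \<and>
     2 * f + 1 \<le> card (author ` {q \<in> set (parents c). is_vote q L})"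

datatype decision = Commit block | Skip | Undecided

type_synonym slot = "nat \<times> nat"  (* (leader validator, round) *)

definition direct_skip :: "nat \<Rightarrow> nat \<Rightarrow> block set \<Rightarrow> slot \<Rightarrow> bool" where
  "direct_skip f w D s \<longleftrightarrow>
     2 * f + 1 \<le> card (author ` {b \<in> D. rnd b = snd s + w - 2 \<and>
        (\<forall>L. author L = fst s \<and> rnd L = snd s \<longrightarrow> \<not> is_vote b L)})"

definition direct_commit :: "nat \<Rightarrow> nat \<Rightarrow> block set \<Rightarrow> slot \<Rightarrow> block \<Rightarrow> bool" where
  "direct_commit f w D s L \<longleftrightarrow> author L = fst s \<and> rnd L = snd s \<and>
     2 * f + 1 \<le> card (author ` {c \<in> D. is_cert f w c L})"

definition max_round :: "block set \<Rightarrow> nat" where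
  "max_round D = Max (insert 0 (rnd ` D))"

text \<open>Slots of rounds > r+w-1 (up to the highest round of the local DAG), in
  slot order: by round, then by the coin order of the leaders of that round.\<close>

definition later_slots :: "(nat \<Rightarrow> nat list) \<Rightarrow> nat \<Rightarrow> block set \<Rightarrow> slot \<Rightarrow> slot list" where
  "later_slots leaders w D s =
     concat (map (\<lambda>r'. map (\<lambda>a. (a, r')) (leaders r')) [snd s + w ..< Suc (max_round D)])"

text \<open>Classification with a recursion bound k (the indirect rule recurses on
  slots of strictly higher rounds; a bound of max_round D + 1 is never reached).\<close>

fun cls :: "nat \<Rightarrow> nat \<Rightarrow> (nat \<Rightarrow> nat list) \<Rightarrow> block set \<Rightarrow> nat \<Rightarrow> slot \<Rightarrow> decision" where
  "cls f w leaders D 0 s = Undecided"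
| "cls f w leaders D (Suc k) s =
     (if direct_skip f w D s then Skip
      else if (\<exists>L. direct_commit f w D s L) then Commit (SOME L. direct_commit f w D s L)
      else (case find (\<lambda>s'. cls f w leaders D k s' \<noteq> Skip) (later_slots leaders w D s) of
              None \<Rightarrow> Undecided
            | Some anc \<Rightarrow>
                (case cls f w leaders D k anc of
                   Commit A \<Rightarrow>
                     (if (\<exists>L c. author L = fst s \<and> rnd L = snd s \<and> is_cert f w c L \<and> path A c)
                      then Commit (SOME L. \<exists>c. author L = fst s \<and> rnd L = snd s \<and> is_cert f w c L \<and> path A c)
                      else Skip)
                 | _ \<Rightarrow> Undecided)))"

definition classify :: "nat \<Rightarrow> nat \<Rightarrow> (nat \<Rightarrow> nat list) \<Rightarrow> block set \<Rightarrow> slot \<Rightarrow> decision" where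
  "classify f w leaders D s = cls f w leaders D (Suc (max_round D)) s"

definition decided :: "decision \<Rightarrow> bool" where
  "decided d \<longleftrightarrow> d \<noteq> Undecided"

end

theory Submission
  imports Defs "HOL-Library.Sublist"
begin

text \<open>Any two sets of 2f+1 validators share an honest one, and an honest validator
  creates at most one block per round. Hence all certificates, at all honest
  validators, certify the same block of a slot; a direct skip at one validator
  rules out every certificate for the slot; and a direct commit at one validator
  provides 2f+1 certificates, so that every block w rounds later, in any honest
  DAG, has a path to one of them. By induction on the recursion depth, two honest
  validators applying the indirect rule to a slot choose the same anchor, since
  each skips only slots that the other cannot commit; so they decide alike.\<close>

lemma find_prefix_eq:
  assumes "prefix xs ys" "find P xs = Some x" "find Q ys = Some y" "Q x" "P y"
  shows "x = y"
proof -
  obtain i where i: "i < length xs" "x = xs ! i" "\<forall>j<i. \<not> P (xs ! j)"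
    using assms(2) by (auto simp: find_Some_iff)
  obtain k where k: "y = ys ! k" "\<forall>j<k. \<not> Q (ys ! j)"
    using assms(3) by (auto simp: find_Some_iff)
  have same_nth: "ys ! j = xs ! j" if "j < length xs" for j
    using assms(1) that by (auto simp: prefix_def nth_append)
  have "\<not> i < k" using k(2) assms(4) i(1,2) same_nth by auto
  moreover have "\<not> k < i" using i assms(5) k(1) same_nth by auto
  ultimately show ?thesis using i k same_nth by simp
qed

lemma prefix_concat_map_upt:
  assumes "a \<le> b"
  shows "prefix (concat (map F [i..<a])) (concat (map F [i..<b]))"
proof (cases "i \<le> a")
  case True
  then have "[i..<b] = [i..<a] @ [a..<b]"
    using upt_add_eq_append[of i a "b - a"] assms by simp
  then show ?thesis by (simp add: prefixI)
next
  case False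
  then show ?thesis by simp
qed

lemma later_slots_prefix:
  "prefix (later_slots leaders w D s) (later_slots leaders w D' s) \<or>
   prefix (later_slots leaders w D' s) (later_slots leaders w D s)"
  unfolding later_slots_def by (meson Suc_le_mono nat_le_linear prefix_concat_map_upt)

lemma later_slots_rnd: "t \<in> set (later_slots leaders w D s) \<Longrightarrow> snd s + w \<le> snd t"
  unfolding later_slots_def by auto

lemma quorum_intersection:
  assumes "finite V" "card V \<le> 3 * f + 1" "card (V - H) \<le> f"
    and "X \<subseteq> V" "Y \<subseteq> V" "2 * f + 1 \<le> card X" "2 * f + 1 \<le> card Y"
  shows "\<exists>h\<in>H. h \<in> X \<and> h \<in> Y"
proof (rule ccontr)
  assume no_honest: "\<not> ?thesis"
  have fin: "finite X" "finite Y" using assms(1,4,5) finite_subset by blast+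
  have "card (X \<union> Y) \<le> card V" using assms(1,4,5) by (simp add: card_mono)
  then have "f + 1 \<le> card (X \<inter> Y)"
    using card_Un_Int[OF fin] assms(2,6,7) by linarith
  moreover have "card (X \<inter> Y) \<le> f"
    using no_honest assms(1,3,4) card_mono[of "V - H" "X \<inter> Y"] by fastforce
  ultimately show False by simp
qed

lemma valid_author_less: "valid n f b \<Longrightarrow> author b < n"
  by (cases b) auto

lemma valid_parents:
  assumes "valid n f b" "0 < rnd b"
  shows "\<forall>q\<in>set (parents b). rnd q = rnd b - 1" "2 * f + 1 \<le> card (author ` set (parents b))"
  using assms by (cases b; auto simp: list_all_iff)+

lemma fsome_SomeD: "fsome xs = Some x \<Longrightarrow> Some x \<in> set xs"
  by (induction xs rule: fsome.induct) auto

lemma dfs_find_path: "dfs_find a r q = Some L \<Longrightarrow> path q L"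
proof (induction a r q rule: dfs_find.induct)
  case (1 a r au rd ps p)
  show ?case
  proof (cases "au = a \<and> rd = r")
    case True
    then show ?thesis using "1.prems" by (auto intro: path_refl)
  next
    case False
    then have "fsome (map (dfs_find a r) ps) = Some L" using "1.prems" by auto
    then have "Some L \<in> set (map (dfs_find a r) ps)" by (rule fsome_SomeD)
    then obtain q where "q \<in> set ps" "dfs_find a r q = Some L" by auto
    then show ?thesis using "1.IH" False by (auto intro: path_step)
  qed
qed

lemma path_closed:
  assumes "path b b'" "b \<in> S" "\<And>x. x \<in> S \<Longrightarrow> set (parents x) \<subseteq> S"
  shows "b' \<in> S"
  using assms by induction auto

lemma card_image_Collect_pos: "0 < card (g ` {x \<in> A. P x}) \<Longrightarrow> \<exists>x\<in>A. P x"
  by (auto simp: card_gt_0_iff)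

lemma direct_commit_cert:
  assumes "direct_commit f w D s L"
  shows "\<exists>c\<in>D. is_cert f w c L"
proof -
  have "0 < card (author ` {c \<in> D. is_cert f w c L})"
    using assms by (simp add: direct_commit_def)
  then show ?thesis by (rule card_image_Collect_pos)
qed

definition agree :: "decision \<Rightarrow> decision \<Rightarrow> bool" where
  "agree x y \<longleftrightarrow> (\<exists>L. x = Commit L \<and> y = Commit L) \<or> (x = Skip \<and> y = Skip)"

lemma agree_sym: "agree x y \<Longrightarrow> agree y x"
  unfolding agree_def by auto

lemma agree_refl: "decided x \<Longrightarrow> agree x x"
  by (cases x) (auto simp: agree_def decided_def)

definition indirect_decision :: "nat \<Rightarrow> nat \<Rightarrow> slot \<Rightarrow> block \<Rightarrow> decision" where
  "indirect_decision f w s A =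
     (if \<exists>L c. author L = fst s \<and> rnd L = snd s \<and> is_cert f w c L \<and> path A c
      then Commit (SOME L. \<exists>c. author L = fst s \<and> rnd L = snd s \<and> is_cert f w c L \<and> path A c)
      else Skip)"

lemma indirect_decision_Commit:
  assumes "indirect_decision f w s A = Commit L"
  shows "\<exists>c. author L = fst s \<and> rnd L = snd s \<and> is_cert f w c L \<and> path A c"
proof -
  have linked: "\<exists>L c. author L = fst s \<and> rnd L = snd s \<and> is_cert f w c L \<and> path A c"
    using assms by (auto simp: indirect_decision_def split: if_splits)
  then have "L = (SOME L. \<exists>c. author L = fst s \<and> rnd L = snd s \<and> is_cert f w c L \<and> path A c)"
    using assms by (simp add: indirect_decision_def)
  then show ?thesis using someI_ex[OF linked] by simp
qed

lemma indirect_decision_not_Skip: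
  "author L = fst s \<Longrightarrow> rnd L = snd s \<Longrightarrow> is_cert f w c L \<Longrightarrow> path A c \<Longrightarrow>
   indirect_decision f w s A \<noteq> Skip"
  unfolding indirect_decision_def by auto

lemma cls_Suc_direct_commit:
  assumes "\<not> direct_skip f w D s" "direct_commit f w D s L"
  obtains L' where "cls f w leaders D (Suc k) s = Commit L'" "direct_commit f w D s L'"
proof -
  have some_commit: "\<exists>L. direct_commit f w D s L" using assms(2) by blast
  then have "cls f w leaders D (Suc k) s = Commit (SOME L. direct_commit f w D s L)"
    using assms(1) by simp
  then show thesis using that someI_ex[OF some_commit] by blast
qed

lemma cls_Suc_indirect:
  assumes "\<not> direct_skip f w D s" "\<nexists>L. direct_commit f w D s L"
    and "decided (cls f w leaders D (Suc k) s)"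
  obtains anc A where
    "find (\<lambda>t. cls f w leaders D k t \<noteq> Skip) (later_slots leaders w D s) = Some anc"
    "cls f w leaders D k anc = Commit A"
    "cls f w leaders D (Suc k) s = indirect_decision f w s A"
proof -
  have "cls f w leaders D (Suc k) s =
    (case find (\<lambda>t. cls f w leaders D k t \<noteq> Skip) (later_slots leaders w D s) of
       None \<Rightarrow> Undecided
     | Some anc \<Rightarrow> (case cls f w leaders D k anc of
                     Commit A \<Rightarrow> indirect_decision f w s A
                   | _ \<Rightarrow> Undecided))"
    using assms(1,2) unfolding indirect_decision_def by (simp only: cls.simps if_False)
  then show thesis
    using that assms(3) by (auto simp: decided_def split: option.splits decision.splits)
qed

locale honest_dags =
  fixes n f w :: nat and H :: "nat set" and D :: "nat \<Rightarrow> block set"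
  assumes validator_count: "n \<le> 3 * f + 1"
    and few_faulty: "card ({..<n} - H) \<le> f"
    and wave_length: "2 \<le> w"
    and dag_valid: "\<And>u b. u \<in> H \<Longrightarrow> b \<in> D u \<Longrightarrow> valid n f b"
    and dag_closed: "\<And>u b. u \<in> H \<Longrightarrow> b \<in> D u \<Longrightarrow> set (parents b) \<subseteq> D u"
    and honest_unique: "\<And>u u' b b'. u \<in> H \<Longrightarrow> u' \<in> H \<Longrightarrow> b \<in> D u \<Longrightarrow> b' \<in> D u' \<Longrightarrow>
                          author b \<in> H \<Longrightarrow> author b' = author b \<Longrightarrow> rnd b' = rnd b \<Longrightarrow> b = b'"
begin

lemma quorums_share_block:
  assumes "u \<in> H" "u' \<in> H" "S \<subseteq> D u" "S' \<subseteq> D u'"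
    and "2 * f + 1 \<le> card (author ` S)" "2 * f + 1 \<le> card (author ` S')"
    and "\<forall>q\<in>S. rnd q = r" "\<forall>q\<in>S'. rnd q = r"
  obtains q where "q \<in> S" "q \<in> S'"
proof -
  have "author ` S \<subseteq> {..<n}" "author ` S' \<subseteq> {..<n}"
    using assms(1-4) by (auto intro: valid_author_less dag_valid)
  then obtain h where "h \<in> H" "h \<in> author ` S" "h \<in> author ` S'"
    using quorum_intersection[of "{..<n}" f H "author ` S" "author ` S'"]
      validator_count few_faulty assms(5,6) by auto
  then obtain q q' where q: "q \<in> S" "q' \<in> S'" "author q = h" "author q' = h"
    by auto
  have "q = q'"
    by (rule honest_unique[OF assms(1,2)]) (use q assms(3,4,7,8) \<open>h \<in> H\<close> in auto)
  then show ?thesis using that q by blast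
qed

lemma cert_parent_rnd:
  assumes "u \<in> H" "c \<in> D u" "is_cert f w c L" "q \<in> set (parents c)"
  shows "rnd q = rnd L + w - 2"
proof -
  have "rnd c = rnd L + w - 1" using assms(3) by (simp add: is_cert_def)
  then show ?thesis
    using valid_parents(1)[OF dag_valid[OF assms(1,2)]] assms(4) wave_length by simp
qed

lemma vote_target_in_dag: "u \<in> H \<Longrightarrow> q \<in> D u \<Longrightarrow> is_vote q L \<Longrightarrow> L \<in> D u"
  unfolding is_vote_def using dfs_find_path path_closed dag_closed by blast

lemma certified_in_dag:
  assumes "u \<in> H" "c \<in> D u" "is_cert f w c L"
  shows "L \<in> D u"
proof -
  have "0 < card (author ` {q \<in> set (parents c). is_vote q L})"
    using assms(3) by (simp add: is_cert_def)
  from card_image_Collect_pos[OF this] obtain q where "q \<in> set (parents c)" "is_vote q L"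
    by blast
  then show ?thesis using vote_target_in_dag dag_closed assms(1,2) by blast
qed

lemma certified_blocks_eq:
  assumes "u \<in> H" "u' \<in> H" "c \<in> D u" "c' \<in> D u'" "is_cert f w c L" "is_cert f w c' L'"
    and "author L' = author L" "rnd L' = rnd L"
  shows "L' = L"
proof -
  obtain q where "q \<in> {q \<in> set (parents c). is_vote q L}" "q \<in> {q \<in> set (parents c'). is_vote q L'}"
  proof (rule quorums_share_block[OF assms(1,2),
        where S = "{q \<in> set (parents c). is_vote q L}" and S' = "{q \<in> set (parents c'). is_vote q L'}"])
    show "{q \<in> set (parents c). is_vote q L} \<subseteq> D u" "{q \<in> set (parents c'). is_vote q L'} \<subseteq> D u'"
      using dag_closed assms(1-4) by blast+
    show "\<forall>q\<in>{q \<in> set (parents c). is_vote q L}. rnd q = rnd L + w - 2"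
      "\<forall>q\<in>{q \<in> set (parents c'). is_vote q L'}. rnd q = rnd L + w - 2"
      using cert_parent_rnd assms by auto
  qed (use assms(5,6) in \<open>simp_all add: is_cert_def\<close>)
  then have "dfs_find (author L) (rnd L) q = Some L" "dfs_find (author L) (rnd L) q = Some L'"
    using assms(7,8) by (auto simp: is_vote_def)
  then show ?thesis by simp
qed

lemma direct_skip_no_cert:
  assumes "u \<in> H" "u' \<in> H" "direct_skip f w (D u) s" "c \<in> D u'" "is_cert f w c L"
    and "author L = fst s" "rnd L = snd s"
  shows False
proof -
  let ?nonvotes = "{b \<in> D u. rnd b = snd s + w - 2 \<and>
                     (\<forall>L. author L = fst s \<and> rnd L = snd s \<longrightarrow> \<not> is_vote b L)}"
  obtain q where "q \<in> ?nonvotes" "q \<in> {q \<in> set (parents c). is_vote q L}"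
  proof (rule quorums_share_block[OF assms(1,2), where S = ?nonvotes
        and S' = "{q \<in> set (parents c). is_vote q L}" and r = "snd s + w - 2"])
    show "{q \<in> set (parents c). is_vote q L} \<subseteq> D u'"
      using dag_closed assms(2,4) by blast
    show "\<forall>q\<in>{q \<in> set (parents c). is_vote q L}. rnd q = snd s + w - 2"
      using cert_parent_rnd assms by auto
  qed (use assms(3,5) in \<open>auto simp: is_cert_def direct_skip_def\<close>)
  then show False using assms(6,7) by blast
qed

lemma certs_reachable:
  assumes "u \<in> H" "u' \<in> H" "2 * f + 1 \<le> card (author ` {c \<in> D u. is_cert f w c L})"
    and "b \<in> D u'" "rnd L + w \<le> rnd b"
  shows "\<exists>c\<in>D u'. is_cert f w c L \<and> path b c"
proof -
  have "\<exists>c\<in>D u'. is_cert f w c L \<and> path b c" if "b \<in> D u'" "rnd b = rnd L + w + d" for b d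
    using that
  proof (induction d arbitrary: b)
    case 0
    have "0 < rnd b" using "0.prems"(2) wave_length by simp
    note parents = valid_parents[OF dag_valid[OF assms(2) "0.prems"(1)] this]
    obtain q where q: "q \<in> set (parents b)" "q \<in> {c \<in> D u. is_cert f w c L}"
    proof (rule quorums_share_block[OF assms(2,1),
          where S = "set (parents b)" and S' = "{c \<in> D u. is_cert f w c L}"])
      show "\<forall>q\<in>{c \<in> D u. is_cert f w c L}. rnd q = rnd L + w - 1"
        by (simp add: is_cert_def)
    qed (use parents assms(3) "0.prems" dag_closed[OF assms(2)] in auto)
    then show ?case using dag_closed[OF assms(2) "0.prems"(1)] path_step[OF _ path_refl] by blast
  next
    case (Suc d)
    note parents = valid_parents[OF dag_valid[OF assms(2) Suc.prems(1)]]
    obtain q where q: "q \<in> set (parents b)"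
      using parents(2) Suc.prems(2) by fastforce
    then have "q \<in> D u'" "rnd q = rnd L + w + d"
      using dag_closed[OF assms(2) Suc.prems(1)] parents(1) Suc.prems(2) by auto
    then show ?case using Suc.IH q path_step by blast
  qed
  then show ?thesis using assms(4,5) le_Suc_ex by blast
qed

lemma commit_has_cert:
  assumes "u \<in> H"
  shows "cls f w leaders (D u) k s = Commit L \<Longrightarrow>
         author L = fst s \<and> rnd L = snd s \<and> (\<exists>c\<in>D u. is_cert f w c L)"
proof (induction k arbitrary: s L)
  case 0
  then show ?case by simp
next
  case (Suc k)
  have no_skip: "\<not> direct_skip f w (D u) s" using Suc.prems by auto
  show ?case
  proof (cases "\<exists>L. direct_commit f w (D u) s L")
    case True
    then obtain L' where "cls f w leaders (D u) (Suc k) s = Commit L'" "direct_commit f w (D u) s L'"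
      using cls_Suc_direct_commit no_skip by metis
    then show ?thesis using Suc.prems direct_commit_cert by (auto simp: direct_commit_def)
  next
    case False
    from Suc.prems have "decided (cls f w leaders (D u) (Suc k) s)" by (simp add: decided_def)
    with cls_Suc_indirect[OF no_skip False] obtain anc A where
      anchor: "cls f w leaders (D u) k anc = Commit A"
      and decision: "cls f w leaders (D u) (Suc k) s = indirect_decision f w s A" by blast
    have "A \<in> D u" using Suc.IH[OF anchor] certified_in_dag assms by blast
    then show ?thesis
      using indirect_decision_Commit[of f w s A L] Suc.prems decision
        path_closed dag_closed[OF assms] by metis
  qed
qed

lemma direct_skip_excludes_commit:
  "u \<in> H \<Longrightarrow> u' \<in> H \<Longrightarrow> direct_skip f w (D u) s \<Longrightarrow> cls f w leaders (D u') k s \<noteq> Commit L"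
  using commit_has_cert direct_skip_no_cert by metis

lemma direct_commit_excludes_other_commit:
  assumes "u \<in> H" "u' \<in> H" "direct_commit f w (D u) s L" "cls f w leaders (D u') k s = Commit L'"
  shows "L' = L"
proof -
  obtain c where "c \<in> D u" "is_cert f w c L" using direct_commit_cert assms(3) by blast
  moreover obtain c' where "c' \<in> D u'" "is_cert f w c' L'" "author L' = fst s" "rnd L' = snd s"
    using commit_has_cert[OF assms(2,4)] by blast
  ultimately show ?thesis
    using certified_blocks_eq[OF assms(1,2)] assms(3) by (auto simp: direct_commit_def)
qed

text \<open>An anchor lies at least w rounds above the slot, so it reaches one of the
  2f+1 certificates behind a direct commit.\<close>

lemma direct_commit_excludes_skip:
  assumes u: "u \<in> H" "u' \<in> H" and commit: "direct_commit f w (D u) s L"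
  shows "cls f w leaders (D u') k s \<noteq> Skip"
proof
  assume skip: "cls f w leaders (D u') k s = Skip"
  then obtain k' where k: "k = Suc k'" by (cases k) auto
  obtain c where c: "c \<in> D u" "is_cert f w c L"
    using direct_commit_cert commit by blast
  have slot: "author L = fst s" "rnd L = snd s" using commit by (auto simp: direct_commit_def)
  have no_skip: "\<not> direct_skip f w (D u') s"
    using direct_skip_no_cert[OF u(2,1) _ c] slot by blast
  then have no_commit: "\<nexists>L. direct_commit f w (D u') s L"
    using cls_Suc_direct_commit skip k by (metis decision.distinct(1))
  from skip k have "decided (cls f w leaders (D u') (Suc k') s)" by (simp add: decided_def)
  with cls_Suc_indirect[OF no_skip no_commit] obtain anc A where
    anc: "find (\<lambda>t. cls f w leaders (D u') k' t \<noteq> Skip) (later_slots leaders w (D u') s) = Some anc"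
    and anchor: "cls f w leaders (D u') k' anc = Commit A"
    and decision: "cls f w leaders (D u') (Suc k') s = indirect_decision f w s A" by blast
  have "A \<in> D u'" "rnd A = snd anc"
    using commit_has_cert[OF u(2) anchor] certified_in_dag u(2) by blast+
  moreover have "snd s + w \<le> snd anc"
    using later_slots_rnd anc by (metis find_Some_iff nth_mem)
  ultimately obtain c' where "is_cert f w c' L" "path A c'"
    using certs_reachable[OF u] commit slot by (fastforce simp: direct_commit_def)
  then show False
    using indirect_decision_not_Skip slot decision skip k by metis
qed

lemma direct_decision_agree:
  assumes u: "u \<in> H" "u' \<in> H"
    and direct: "direct_skip f w (D u) s \<or> (\<exists>L. direct_commit f w (D u) s L)"
    and decided: "decided (cls f w leaders (D u') k' s)"
  shows "agree (cls f w leaders (D u) (Suc k) s) (cls f w leaders (D u') k' s)"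
proof (cases "direct_skip f w (D u) s")
  case True
  then show ?thesis
    using direct_skip_excludes_commit[OF u True] decided
    by (cases "cls f w leaders (D u') k' s") (auto simp: agree_def decided_def)
next
  case False
  with direct obtain L where L: "cls f w leaders (D u) (Suc k) s = Commit L"
    "direct_commit f w (D u) s L"
    using cls_Suc_direct_commit by metis
  then show ?thesis
    using direct_commit_excludes_skip[OF u L(2)] direct_commit_excludes_other_commit[OF u L(2)]
      decided
    by (cases "cls f w leaders (D u') k' s") (auto simp: agree_def decided_def)
qed

lemma cls_agree:
  assumes u: "u \<in> H" "u' \<in> H"
  shows "decided (cls f w leaders (D u) k s) \<Longrightarrow> decided (cls f w leaders (D u') k' s) \<Longrightarrow>
    agree (cls f w leaders (D u) k s) (cls f w leaders (D u') k' s)"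
proof (induction k arbitrary: k' s)
  case 0
  then show ?case by (simp add: decided_def)
next
  case (Suc k)
  obtain k'' where k': "k' = Suc k''" using Suc.prems(2) by (cases k') (auto simp: decided_def)
  consider "direct_skip f w (D u) s \<or> (\<exists>L. direct_commit f w (D u) s L)"
    | "direct_skip f w (D u') s \<or> (\<exists>L. direct_commit f w (D u') s L)"
    | "\<not> direct_skip f w (D u) s" "\<nexists>L. direct_commit f w (D u) s L"
      "\<not> direct_skip f w (D u') s" "\<nexists>L. direct_commit f w (D u') s L"
    by blast
  then show ?case
  proof cases
    case 1
    then show ?thesis using direct_decision_agree[OF u] Suc.prems(2) by blast
  next
    case 2
    then show ?thesis
      using direct_decision_agree[OF u(2,1)] Suc.prems(1) agree_sym k' by blast
  next
    case 3
    obtain anc A where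
      anc: "find (\<lambda>t. cls f w leaders (D u) k t \<noteq> Skip) (later_slots leaders w (D u) s) = Some anc"
      and anchor: "cls f w leaders (D u) k anc = Commit A"
      and decision: "cls f w leaders (D u) (Suc k) s = indirect_decision f w s A"
      using cls_Suc_indirect[OF 3(1,2) Suc.prems(1)] .
    obtain anc' A' where
      anc': "find (\<lambda>t. cls f w leaders (D u') k'' t \<noteq> Skip) (later_slots leaders w (D u') s) = Some anc'"
      and anchor': "cls f w leaders (D u') k'' anc' = Commit A'"
      and decision': "cls f w leaders (D u') (Suc k'') s = indirect_decision f w s A'"
      using cls_Suc_indirect[OF 3(3,4) Suc.prems(2)[unfolded k']] .
    have agree_at: "agree (cls f w leaders (D u) k t) (cls f w leaders (D u') k'' t)"
      if "cls f w leaders (D u) k t \<noteq> Undecided" "cls f w leaders (D u') k'' t \<noteq> Undecided" for t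
      using Suc.IH that by (simp add: decided_def)
    have "cls f w leaders (D u') k'' anc \<noteq> Skip" "cls f w leaders (D u) k anc' \<noteq> Skip"
      using agree_at[of anc] agree_at[of anc'] anchor anchor' by (auto simp: agree_def)
    then have "anc' = anc"
      using find_prefix_eq[OF _ anc anc'] find_prefix_eq[OF _ anc' anc] later_slots_prefix by metis
    then have "A' = A" using agree_at[of anc] anchor anchor' by (simp add: agree_def)
    then show ?thesis
      using decision decision' k' agree_refl Suc.prems(1) by simp
  qed
qed

end

theorem lemma6:
  fixes n f w :: nat and leaders :: "nat \<Rightarrow> nat list" and H :: "nat set"
    and D :: "nat \<Rightarrow> block set" and v v' a r :: nat
  assumes n_def: "n = 3 * f + 1"
    and wave: "w \<in> {4, 5}"
    and honest_validators: "H \<subseteq> {..<n}"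
    and byz_bound: "card ({..<n} - H) \<le> f"
    and coin: "\<forall>r'. distinct (leaders r') \<and> set (leaders r') \<subseteq> {..<n}"
    and local_dags: "\<forall>u\<in>H. finite (D u) \<and>
                       (\<forall>b\<in>D u. valid n f b \<and> set (parents b) \<subseteq> D u)"
    and honest_unique: "\<forall>b\<in>(\<Union>u\<in>H. D u). \<forall>b'\<in>(\<Union>u\<in>H. D u).
                          author b \<in> H \<and> author b' = author b \<and> rnd b' = rnd b \<longrightarrow> b = b'"
    and v_honest: "v \<in> H" and v'_honest: "v' \<in> H"
    and slot: "a \<in> set (leaders r)"
    and dec_v: "decided (classify f w leaders (D v) (a, r))"
    and dec_v': "decided (classify f w leaders (D v') (a, r))"
  shows "(\<exists>L. classify f w leaders (D v) (a, r) = Commit L \<and>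
              classify f w leaders (D v') (a, r) = Commit L)
         \<or> (classify f w leaders (D v) (a, r) = Skip \<and>
            classify f w leaders (D v') (a, r) = Skip)"
proof -
  interpret honest_dags n f w H D
    by unfold_locales (use n_def wave byz_bound local_dags honest_unique in auto)
  have "agree (classify f w leaders (D v) (a, r)) (classify f w leaders (D v') (a, r))"
    using dec_v dec_v' unfolding classify_def by (rule cls_agree[OF v_honest v'_honest])
  then show ?thesis unfolding agree_def .
qed

end
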